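(* Fix $\varepsilon\in(0,1)$, $n\ge2$, and suppose $\boldsymbol{X}\sim P(n,\tau,\mu_{\mathrm{L}},\mu_{\mathrm{R}})$ for some $\tau\in[n-1]$ and $\mu_{\mathrm{L}},\mu_{\mathrm{R}}\in\mathbb{R}$; let $\eta=\tau/n$. (a) If $\mu_{\mathrm{L}}=\mu_{\mathrm{R}}$, then $\mathbb{P}\{\max_{t\in T_0}|\boldsymbol{v}_t^\top\boldsymbol{X}|>\sqrt{2\log(|T_0|/\varepsilon)}\}\le\varepsilon$. (b) If $|\mu_{\mathrm{L}}-\mu_{\mathrm{R}}|\sqrt{\eta(1-\eta)}>\sqrt{24\log(|T_0|/\varepsilon)/n}$, then $\mathbb{P}\{\max_{t\in T_0}|\boldsymbol{v}_t^\top\boldsymbol{X}|\le\sqrt{2\log(|T_0|/\varepsilon)}\}\le\varepsilon$.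
   Context: $P(n,\tau,\mu_{\mathrm{L}},\mu_{\mathrm{R}})$ is the law of $N_n(\boldsymbol{\mu},I_n)$ with $\mu_i=\mu_{\mathrm{L}}\mathbb{1}\{i\le\tau\}+\mu_{\mathrm{R}}\mathbb{1}\{i>\tau\}$. For $t\in[n-1]$, $\boldsymbol{v}_t=\bigl(\sqrt{\tfrac{n-t}{tn}}\boldsymbol{1}_t^\top,-\sqrt{\tfrac{t}{(n-t)n}}\boldsymbol{1}_{n-t}^\top\bigr)^\top$. With $Q=\lfloor\log_2(n/2)\rfloor$, $T_0=\{2^q:0\le q\le Q\}\cup\{n-2^q:0\le q\le Q\}$. *)

theory Defs
  imports "HOL-Probability.Probability"
begin

text \<open>Coordinates are indexed by 1..n; vectors are functions nat => real.\<close>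

definition cp_mean :: "nat \<Rightarrow> real \<Rightarrow> real \<Rightarrow> nat \<Rightarrow> real" where
  "cp_mean \<tau> \<mu>L \<mu>R i = (if i \<le> \<tau> then \<mu>L else \<mu>R)"

definition cp_law :: "nat \<Rightarrow> nat \<Rightarrow> real \<Rightarrow> real \<Rightarrow> (nat \<Rightarrow> real) measure" where
  "cp_law n \<tau> \<mu>L \<mu>R =
     (\<Pi>\<^sub>M i\<in>{1..n}. density lborel (normal_density (cp_mean \<tau> \<mu>L \<mu>R i) 1))"

definition cp_v :: "nat \<Rightarrow> nat \<Rightarrow> nat \<Rightarrow> real" where
  "cp_v n t i = (if i \<le> t then sqrt ((real n - real t) / (real t * real n))
                 else - sqrt (real t / ((real n - real t) * real n)))"

definition cp_inner :: "nat \<Rightarrow> nat \<Rightarrow> (nat \<Rightarrow> real) \<Rightarrow> real" where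
  "cp_inner n t x = (\<Sum>i=1..n. cp_v n t i * x i)"

definition cp_Q :: "nat \<Rightarrow> nat" where
  "cp_Q n = nat \<lfloor>log 2 (real n / 2)\<rfloor>"

definition cp_T0 :: "nat \<Rightarrow> nat set" where
  "cp_T0 n = {2 ^ q | q. q \<le> cp_Q n} \<union> {n - 2 ^ q | q. q \<le> cp_Q n}"

definition cp_stat :: "nat \<Rightarrow> (nat \<Rightarrow> real) \<Rightarrow> real" where
  "cp_stat n x = Max ((\<lambda>t. \<bar>cp_inner n t x\<bar>) ` cp_T0 n)"

end

(* Every contrast vector v_t has unit norm, so v_t' X ~ N(v_t' mu, 1), and
   P(|v_t' X - v_t' mu| > s) <= exp(-s^2/2).  With c^2 = 2 log(|T_0|/eps) each of these
   events has probability at most eps/|T_0|.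
   (a) If mu_L = mu_R, every v_t' mu vanishes and a union bound over T_0 gives eps.
   (b) T_0 contains t = 2^q with tau/2 < t <= tau (or, when tau > n/2, t = n - 2^q with
   n - t and n - tau in the same relation).  For this t,
   (v_t' mu)^2 >= (mu_L - mu_R)^2 tau (n - tau) / (3 n), which the hypothesis makes larger
   than (2c)^2; so max_t |v_t' X| <= c forces |v_t' X - v_t' mu| > c. *)
theory Submission
  imports Defs
begin

section \<open>Gaussian tails\<close>

lemma std_normal_density_shift_le:
  fixes s x :: real
  assumes "0 \<le> s" "s \<le> x"
  shows "std_normal_density x \<le> exp (- s\<^sup>2 / 2) * std_normal_density (x - s)"
proof -
  have "- x\<^sup>2 / 2 \<le> - s\<^sup>2 / 2 + - (x - s)\<^sup>2 / 2"
    using assms mult_left_mono[of s x s] by (simp add: power2_eq_square algebra_simps)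
  then have "exp (- x\<^sup>2 / 2) \<le> exp (- s\<^sup>2 / 2) * exp (- (x - s)\<^sup>2 / 2)"
    by (simp add: mult_exp_exp)
  then show ?thesis
    by (simp add: std_normal_density_def divide_right_mono)
qed

(* Each half-line tail is moved onto a half-line through 0 at the cost of the factor
   exp(-s^2/2); the two moved pieces have total mass at most 1, so no factor 2 appears. *)
lemma nn_integral_std_normal_tail_le:
  fixes s :: real
  assumes s: "0 \<le> s"
  shows "(\<integral>\<^sup>+x\<in>{x. s < \<bar>x\<bar>}. std_normal_density x \<partial>lborel) \<le> exp (- s\<^sup>2 / 2)"
proof -
  let ?f = std_normal_density
  let ?right = "\<lambda>x. ennreal (?f (x - s) * indicator {s<..} x)"
  let ?left = "\<lambda>x. ennreal (?f (x + s) * indicator {..< -s} x)"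
  have pointwise:
    "ennreal (?f x) * indicator {x. s < \<bar>x\<bar>} x \<le> exp (- s\<^sup>2 / 2) * (?right x + ?left x)" for x
  proof -
    consider "s < x" | "x < - s" | "\<bar>x\<bar> \<le> s"
      by linarith
    then show ?thesis
    proof cases
      case 1
      then have "?f x \<le> exp (- s\<^sup>2 / 2) * ?f (x - s)"
        using std_normal_density_shift_le[OF s] by simp
      with 1 s show ?thesis
        by (simp add: indicator_def ennreal_mult'[symmetric] ennreal_leI)
    next
      case 2
      have "?f (- x - s) = ?f (x + s)"
        by (simp add: std_normal_density_def power2_eq_square algebra_simps)
      then have "?f x \<le> exp (- s\<^sup>2 / 2) * ?f (x + s)"
        using std_normal_density_shift_le[OF s, of "- x"] 2 by (simp add: std_normal_density_def)
      with 2 s show ?thesis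
        by (simp add: indicator_def ennreal_mult'[symmetric] ennreal_leI)
    qed (simp add: indicator_def)
  qed
  have "(\<integral>\<^sup>+x\<in>{x. s < \<bar>x\<bar>}. ?f x \<partial>lborel)
      \<le> (\<integral>\<^sup>+x. exp (- s\<^sup>2 / 2) * (?right x + ?left x) \<partial>lborel)"
    using pointwise by (intro nn_integral_mono) simp
  also have "\<dots> = exp (- s\<^sup>2 / 2) * ((\<integral>\<^sup>+x. ?right x \<partial>lborel) + (\<integral>\<^sup>+x. ?left x \<partial>lborel))"
    by (simp add: nn_integral_cmult nn_integral_add)
  also have "(\<integral>\<^sup>+x. ?right x \<partial>lborel) = (\<integral>\<^sup>+x. ?right (s + 1 * x) \<partial>lborel)"
    using nn_integral_real_affine[of ?right 1 s] by simp
  also have "\<dots> = (\<integral>\<^sup>+x. ?f x * indicator {0<..} x \<partial>lborel)"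
    by (intro nn_integral_cong) (simp add: indicator_def)
  also have "(\<integral>\<^sup>+x. ?left x \<partial>lborel) = (\<integral>\<^sup>+x. ?left (- s + 1 * x) \<partial>lborel)"
    using nn_integral_real_affine[of ?left 1 "- s"] by simp
  also have "\<dots> = (\<integral>\<^sup>+x. ?f x * indicator {..<0} x \<partial>lborel)"
    by (intro nn_integral_cong) (simp add: indicator_def)
  also have "(\<integral>\<^sup>+x. ?f x * indicator {0<..} x \<partial>lborel)
      + (\<integral>\<^sup>+x. ?f x * indicator {..<0} x \<partial>lborel) \<le> (\<integral>\<^sup>+x. ?f x \<partial>lborel)"
    by (subst nn_integral_add[symmetric]) (auto intro!: nn_integral_mono simp: indicator_def)
  also have "(\<integral>\<^sup>+x. ?f x \<partial>lborel) = 1"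
    by (simp add: nn_integral_eq_integral)
  finally show ?thesis
    by (simp add: mult_left_mono)
qed

lemma (in prob_space) normal_tail_le:
  fixes s m :: real
  assumes s: "0 \<le> s" and Y: "distributed M lborel Y (normal_density m 1)"
  shows "prob {x \<in> space M. s < \<bar>Y x - m\<bar>} \<le> exp (- s\<^sup>2 / 2)"
proof -
  have "distributed M lborel (\<lambda>x. - m + 1 * Y x) (normal_density (- m + 1 * m) (\<bar>1\<bar> * 1))"
    by (rule normal_density_affine[OF Y]) auto
  then have Z: "distributed M lborel (\<lambda>x. Y x - m) std_normal_density"
    by simp
  have "{x \<in> space M. s < \<bar>Y x - m\<bar>} = (\<lambda>x. Y x - m) -` {x. s < \<bar>x\<bar>} \<inter> space M"
    by auto
  then have "emeasure M {x \<in> space M. s < \<bar>Y x - m\<bar>}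
      = (\<integral>\<^sup>+x\<in>{x. s < \<bar>x\<bar>}. std_normal_density x \<partial>lborel)"
    using distributed_emeasure[OF Z, of "{x. s < \<bar>x\<bar>}"] by simp
  also have "\<dots> \<le> exp (- s\<^sup>2 / 2)"
    by (rule nn_integral_std_normal_tail_le[OF s])
  finally show ?thesis
    by (simp add: emeasure_eq_measure)
qed

section \<open>Independent normal coordinates\<close>

lemma indep_vars_PiM_components:
  assumes "I \<noteq> {}" and prob: "\<And>i. i \<in> I \<Longrightarrow> prob_space (M i)"
  shows "prob_space.indep_vars (\<Pi>\<^sub>M i\<in>I. M i) M (\<lambda>i \<omega>. \<omega> i) I"
proof -
  interpret prob_space "\<Pi>\<^sub>M i\<in>I. M i"
    using prob by (rule prob_space_PiM)
  have "distr (\<Pi>\<^sub>M i\<in>I. M i) (\<Pi>\<^sub>M i\<in>I. M i) (\<lambda>\<omega>. \<lambda>i\<in>I. \<omega> i)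
      = distr (\<Pi>\<^sub>M i\<in>I. M i) (\<Pi>\<^sub>M i\<in>I. M i) (\<lambda>\<omega>. \<omega>)"
    by (intro distr_cong) (auto simp: space_PiM)
  also have "\<dots> = (\<Pi>\<^sub>M i\<in>I. M i)"
    by simp
  also have "\<dots> = (\<Pi>\<^sub>M i\<in>I. distr (\<Pi>\<^sub>M i\<in>I. M i) (M i) (\<lambda>\<omega>. \<omega> i))"
    by (intro PiM_cong) (simp_all add: distr_PiM_component prob)
  finally show ?thesis
    using assms by (subst indep_vars_iff_distr_eq_PiM') auto
qed

lemma PiM_normal_linear_combination:
  fixes I :: "'i set" and \<mu> \<sigma> a :: "'i \<Rightarrow> real"
  assumes I: "finite I" "I \<noteq> {}"
    and \<sigma>: "\<And>i. i \<in> I \<Longrightarrow> 0 < \<sigma> i" and a: "\<And>i. i \<in> I \<Longrightarrow> a i \<noteq> 0"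
  defines "M \<equiv> \<Pi>\<^sub>M i\<in>I. density lborel (normal_density (\<mu> i) (\<sigma> i))"
  shows "distributed M lborel (\<lambda>x. \<Sum>i\<in>I. a i * x i)
           (normal_density (\<Sum>i\<in>I. a i * \<mu> i) (sqrt (\<Sum>i\<in>I. (a i * \<sigma> i)\<^sup>2)))"
proof -
  let ?N = "\<lambda>i. density lborel (normal_density (\<mu> i) (\<sigma> i))"
  interpret prob_space M
    unfolding M_def by (intro prob_space_PiM prob_space_normal_density \<sigma>)
  have component: "distributed M lborel (\<lambda>x. x i) (normal_density (\<mu> i) (\<sigma> i))" if i: "i \<in> I" for i
  proof -
    have "distr M lborel (\<lambda>x. x i) = distr M (?N i) (\<lambda>x. x i)"
      by (intro distr_cong) auto
    also have "\<dots> = ?N i"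
      unfolding M_def by (intro distr_PiM_component prob_space_normal_density \<sigma> i)
    finally show ?thesis
      using i unfolding distributed_def M_def
      by (auto simp: measurable_cong_sets[OF refl sets_density])
  qed
  have "indep_vars ?N (\<lambda>i x. x i) I"
    unfolding M_def by (intro indep_vars_PiM_components prob_space_normal_density \<sigma> I)
  then have "indep_vars (\<lambda>_. borel) (\<lambda>i x. a i * x i) I"
    by (rule indep_vars_compose2) (simp add: measurable_cong_sets[OF sets_density refl])
  moreover have "distributed M lborel (\<lambda>x. a i * x i) (normal_density (a i * \<mu> i) (\<bar>a i\<bar> * \<sigma> i))"
    if "i \<in> I" for i
    using normal_density_affine[OF component[OF that], of "a i" 0] a \<sigma> that by simp
  ultimately show ?thesis
    using sum_indep_normal[of I "\<lambda>i x. a i * x i" "\<lambda>i. \<bar>a i\<bar> * \<sigma> i" "\<lambda>i. a i * \<mu> i"] I a \<sigma>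
    by (simp add: power_mult_distrib)
qed

section \<open>Contrast vectors\<close>

lemma sum_atLeastAtMost_if_le:
  fixes f :: "nat \<Rightarrow> real"
  assumes "a \<le> c"
  shows "(\<Sum>i=1..c. if i \<le> a then f i else y) = (\<Sum>i=1..a. f i) + (real c - real a) * y"
proof -
  have "{1..c} = {1..a} \<union> {a<..c}" "{1..a} \<inter> {a<..c} = {}"
    using assms by auto
  then have "(\<Sum>i=1..c. if i \<le> a then f i else y)
      = (\<Sum>i=1..a. if i \<le> a then f i else y) + (\<Sum>i\<in>{a<..c}. if i \<le> a then f i else y)"
    by (simp add: sum.union_disjoint)
  also have "\<dots> = (\<Sum>i=1..a. f i) + (\<Sum>i\<in>{a<..c}. y)"
    by (intro arg_cong2[where f = "(+)"] sum.cong) auto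
  finally show ?thesis
    using assms by (simp add: of_nat_diff)
qed

lemma cp_v_eq:
  assumes "0 < t" "t < n"
  shows "cp_v n t i = (if i \<le> t then sqrt (real t * (real n - real t) / real n) / real t
                       else - (sqrt (real t * (real n - real t) / real n) / (real n - real t)))"
proof -
  define d where "d = real n - real t"
  have pos: "real t > 0" "d > 0" "real n > 0"
    using assms by (auto simp: d_def)
  have "sqrt (d / (real t * real n)) = sqrt (real t * d / real n) / real t"
    using pos by (intro real_sqrt_unique) (simp_all add: power_divide field_simps power2_eq_square)
  moreover have "sqrt (real t / (d * real n)) = sqrt (real t * d / real n) / d"
    using pos by (intro real_sqrt_unique) (simp_all add: power_divide field_simps power2_eq_square)
  ultimately show ?thesis
    by (simp add: cp_v_def d_def)
qed

lemma sum_cp_v_squared: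
  assumes "0 < t" "t < n"
  shows "(\<Sum>i=1..n. (cp_v n t i)\<^sup>2) = 1"
proof -
  define d where "d = real n - real t"
  define A where "A = sqrt (real t * d / real n)"
  have pos: "real t > 0" "d > 0" "real n > 0"
    using assms by (auto simp: d_def)
  have A2: "A\<^sup>2 = real t * d / real n"
    using pos by (simp add: A_def)
  have "(\<Sum>i=1..n. (cp_v n t i)\<^sup>2) = (\<Sum>i=1..n. if i \<le> t then (A / real t)\<^sup>2 else (A / d)\<^sup>2)"
    using assms by (intro sum.cong) (auto simp: cp_v_eq A_def d_def)
  also have "\<dots> = real t * (A / real t)\<^sup>2 + d * (A / d)\<^sup>2"
    using assms by (simp only: sum_atLeastAtMost_if_le) (simp add: d_def)
  also have "\<dots> = (d + real t) / real n"
    unfolding power_divide A2 using pos by (simp add: field_simps power2_eq_square)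
  also have "\<dots> = 1"
    using pos by (simp add: d_def)
  finally show ?thesis .
qed

lemma cp_inner_cp_mean_of_le:
  assumes "0 < t" "t \<le> \<tau>" "\<tau> \<le> n" "t < n"
  shows "cp_inner n t (cp_mean \<tau> \<mu>L \<mu>R)
           = sqrt (real t * (real n - real t) / real n) * ((real n - real \<tau>) / (real n - real t)) * (\<mu>L - \<mu>R)"
proof -
  define A where "A = sqrt (real t * (real n - real t) / real n)"
  have "cp_inner n t (cp_mean \<tau> \<mu>L \<mu>R)
      = (\<Sum>i=1..n. if i \<le> \<tau> then (if i \<le> t then A / real t * \<mu>L else - (A / (real n - real t)) * \<mu>L)
                    else - (A / (real n - real t)) * \<mu>R)"
    unfolding cp_inner_def using assms by (intro sum.cong) (auto simp: cp_v_eq cp_mean_def A_def)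
  also have "\<dots> = real t * (A / real t * \<mu>L) + (real \<tau> - real t) * (- (A / (real n - real t)) * \<mu>L)
                    + (real n - real \<tau>) * (- (A / (real n - real t)) * \<mu>R)"
    using assms by (simp only: sum_atLeastAtMost_if_le) simp
  also have "\<dots> = A * ((real n - real \<tau>) / (real n - real t)) * (\<mu>L - \<mu>R)"
    using assms by (simp add: divide_simps) (simp add: algebra_simps)
  finally show ?thesis
    by (simp add: A_def)
qed

lemma cp_inner_cp_mean_of_ge:
  assumes "0 < t" "\<tau> \<le> t" "t < n"
  shows "cp_inner n t (cp_mean \<tau> \<mu>L \<mu>R)
           = sqrt (real t * (real n - real t) / real n) * (real \<tau> / real t) * (\<mu>L - \<mu>R)"
proof -
  define A where "A = sqrt (real t * (real n - real t) / real n)"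
  have "cp_inner n t (cp_mean \<tau> \<mu>L \<mu>R)
      = (\<Sum>i=1..n. if i \<le> t then (if i \<le> \<tau> then A / real t * \<mu>L else A / real t * \<mu>R)
                    else - (A / (real n - real t)) * \<mu>R)"
    unfolding cp_inner_def using assms by (intro sum.cong) (auto simp: cp_v_eq cp_mean_def A_def)
  also have "\<dots> = real \<tau> * (A / real t * \<mu>L) + (real t - real \<tau>) * (A / real t * \<mu>R)
                    + (real n - real t) * (- (A / (real n - real t)) * \<mu>R)"
    using assms by (simp only: sum_atLeastAtMost_if_le) simp
  also have "\<dots> = A * (real \<tau> / real t) * (\<mu>L - \<mu>R)"
    using assms by (simp add: divide_simps) (simp add: algebra_simps)
  finally show ?thesis
    by (simp add: A_def)
qed

section \<open>The dyadic grid\<close>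

lemma le_cp_Q_iff:
  assumes "2 \<le> n"
  shows "q \<le> cp_Q n \<longleftrightarrow> 2 * 2 ^ q \<le> n"
proof -
  have "0 \<le> log 2 (real n / 2)"
    using assms by simp
  then have "q \<le> cp_Q n \<longleftrightarrow> real q \<le> log 2 (real n / 2)"
    by (simp add: cp_Q_def le_nat_iff le_floor_iff)
  also have "\<dots> \<longleftrightarrow> 2 ^ q \<le> real n / 2"
    using assms by (simp add: le_log_iff powr_realpow)
  also have "\<dots> \<longleftrightarrow> real (2 * 2 ^ q) \<le> real n"
    by (simp add: field_simps)
  also have "\<dots> \<longleftrightarrow> 2 * 2 ^ q \<le> n"
    by (rule of_nat_le_iff)
  finally show ?thesis .
qed

lemma finite_cp_T0: "finite (cp_T0 n)"
  unfolding cp_T0_def by (simp add: setcompr_eq_image)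

lemma cp_T0_nonempty: "cp_T0 n \<noteq> {}"
  unfolding cp_T0_def by (auto intro!: exI[of _ 0])

lemma cp_T0_bounds:
  assumes "2 \<le> n" "t \<in> cp_T0 n"
  shows "0 < t" "t < n"
proof -
  obtain q where "2 * 2 ^ q \<le> n" "t = 2 ^ q \<or> t = n - 2 ^ q"
    using assms(2) unfolding cp_T0_def le_cp_Q_iff[OF assms(1)] by auto
  moreover have "1 \<le> (2::nat) ^ q"
    by simp
  ultimately show "0 < t" "t < n"
    by (elim disjE; linarith)+
qed

lemma dyadic_approximation:
  assumes "2 \<le> n" "0 < u" "2 * u \<le> n"
  obtains q where "q \<le> cp_Q n" "2 ^ q \<le> u" "u < 2 * 2 ^ q"
proof -
  obtain q where "2 ^ q \<le> u" "u < 2 ^ (q + 1)"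
    using ex_power_ivl1[of 2 u] assms(2) by auto
  with assms show thesis
    by (intro that[of q]) (auto simp: le_cp_Q_iff)
qed

lemma dyadic_signal_bound:
  fixes t u n :: nat and D :: real
  assumes "0 < t" "t \<le> u" "u < 2 * t" "2 * u \<le> n" "0 \<le> D"
  shows "D * real u * (real n - real u) / real n
           \<le> 3 * (real t * (real n - real t) / real n * ((real n - real u) / (real n - real t))\<^sup>2 * D)"
proof -
  have real: "0 < real t" "real t \<le> real u" "real u < 2 * real t" "2 * real u \<le> real n"
    using assms by linarith+
  then have pos: "0 < real n" "0 < real n - real t" "0 \<le> real n - real u"
    by linarith+
  have "u * (3 * real n - 2 * u) \<le> 2 * t * (3 * real n - 2 * u)" "2 * real u * u \<le> n * real u"
    using real by (intro mult_right_mono; simp)+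
  then have key: "u * (real n - t) \<le> 3 * t * (real n - u)"
    by (simp add: algebra_simps)
  have "D * u * (real n - u) / n = u * (real n - t) * ((real n - u) * D / (n * (real n - t)))"
    using pos by (simp add: field_simps)
  also have "\<dots> \<le> 3 * t * (real n - u) * ((real n - u) * D / (n * (real n - t)))"
    using key pos assms(5) by (intro mult_right_mono) auto
  also have "\<dots> = 3 * (t * (real n - t) / n * ((real n - u) / (real n - t))\<^sup>2 * D)"
    using pos by (simp add: power2_eq_square)
  finally show ?thesis .
qed

lemma cp_T0_captures_signal:
  assumes n: "2 \<le> n" and \<tau>: "0 < \<tau>" "\<tau> < n"
  obtains t where "t \<in> cp_T0 n"
    "(\<mu>L - \<mu>R)\<^sup>2 * real \<tau> * (real n - real \<tau>) / real n
       \<le> 3 * (cp_inner n t (cp_mean \<tau> \<mu>L \<mu>R))\<^sup>2"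
proof (cases "2 * \<tau> \<le> n")
  case True
  obtain q where q: "q \<le> cp_Q n" "2 ^ q \<le> \<tau>" "\<tau> < 2 * 2 ^ q"
    by (rule dyadic_approximation[OF n \<tau>(1) True])
  define t :: nat where "t = 2 ^ q"
  have t: "t \<in> cp_T0 n"
    using q(1) unfolding cp_T0_def t_def by auto
  then have "0 < t" "t < n"
    using cp_T0_bounds n by auto
  then have "cp_inner n t (cp_mean \<tau> \<mu>L \<mu>R)
      = sqrt (real t * (real n - real t) / real n) * ((real n - real \<tau>) / (real n - real t)) * (\<mu>L - \<mu>R)"
    using q \<tau> by (intro cp_inner_cp_mean_of_le) (auto simp: t_def)
  then have "(cp_inner n t (cp_mean \<tau> \<mu>L \<mu>R))\<^sup>2
      = real t * (real n - real t) / real n * ((real n - real \<tau>) / (real n - real t))\<^sup>2 * (\<mu>L - \<mu>R)\<^sup>2"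
    using \<open>t < n\<close> by (simp only: power_mult_distrib) simp
  moreover have "(\<mu>L - \<mu>R)\<^sup>2 * real \<tau> * (real n - real \<tau>) / real n
      \<le> 3 * (real t * (real n - real t) / real n * ((real n - real \<tau>) / (real n - real t))\<^sup>2 * (\<mu>L - \<mu>R)\<^sup>2)"
    using q True unfolding t_def by (intro dyadic_signal_bound) simp_all
  ultimately show thesis
    using that t by simp
next
  case False
  then have "0 < n - \<tau>" "2 * (n - \<tau>) \<le> n"
    using \<tau> by auto
  then obtain q where q: "q \<le> cp_Q n" "2 ^ q \<le> n - \<tau>" "n - \<tau> < 2 * 2 ^ q"
    by (rule dyadic_approximation[OF n])
  define t :: nat where "t = n - 2 ^ q"
  have t: "t \<in> cp_T0 n"
    using q(1) unfolding cp_T0_def t_def by auto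
  then have "0 < t" "t < n"
    using cp_T0_bounds n by auto
  then have "cp_inner n t (cp_mean \<tau> \<mu>L \<mu>R)
      = sqrt (real t * (real n - real t) / real n) * (real \<tau> / real t) * (\<mu>L - \<mu>R)"
    using q False by (intro cp_inner_cp_mean_of_ge) (auto simp: t_def)
  then have "(cp_inner n t (cp_mean \<tau> \<mu>L \<mu>R))\<^sup>2
      = real t * (real n - real t) / real n * (real \<tau> / real t)\<^sup>2 * (\<mu>L - \<mu>R)\<^sup>2"
    using \<open>t < n\<close> by (simp only: power_mult_distrib) simp
  also have "\<dots> = real (2 ^ q) * (real n - real (2 ^ q)) / real n
      * ((real n - real (n - \<tau>)) / (real n - real (2 ^ q)))\<^sup>2 * (\<mu>L - \<mu>R)\<^sup>2"
    using q \<tau> \<open>t < n\<close> by (simp add: t_def of_nat_diff)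
  finally have "(cp_inner n t (cp_mean \<tau> \<mu>L \<mu>R))\<^sup>2 = \<dots>" .
  moreover have "(\<mu>L - \<mu>R)\<^sup>2 * real (n - \<tau>) * (real n - real (n - \<tau>)) / real n
      \<le> 3 * (real (2 ^ q) * (real n - real (2 ^ q)) / real n
             * ((real n - real (n - \<tau>)) / (real n - real (2 ^ q)))\<^sup>2 * (\<mu>L - \<mu>R)\<^sup>2)"
    using q False by (intro dyadic_signal_bound) simp_all
  ultimately show thesis
    using that t \<tau> by (simp add: of_nat_diff mult.commute mult.left_commute)
qed

section \<open>The scan statistic\<close>

lemma cp_stat_gt_iff: "c < cp_stat n X \<longleftrightarrow> (\<exists>t\<in>cp_T0 n. c < \<bar>cp_inner n t X\<bar>)"
  unfolding cp_stat_def using finite_cp_T0 cp_T0_nonempty by (simp add: Max_gr_iff)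

lemma abs_cp_inner_le_cp_stat: "t \<in> cp_T0 n \<Longrightarrow> \<bar>cp_inner n t X\<bar> \<le> cp_stat n X"
  unfolding cp_stat_def using finite_cp_T0 by (intro Max_ge) auto

lemma prob_space_cp_law: "prob_space (cp_law n \<tau> \<mu>L \<mu>R)"
  unfolding cp_law_def by (intro prob_space_PiM prob_space_normal_density) simp

lemma borel_measurable_cp_inner [measurable]:
  "cp_inner n t \<in> borel_measurable (cp_law n \<tau> \<mu>L \<mu>R)"
  unfolding cp_inner_def[abs_def] cp_law_def by measurable

lemma cp_inner_distributed:
  assumes "0 < t" "t < n"
  shows "distributed (cp_law n \<tau> \<mu>L \<mu>R) lborel (cp_inner n t)
           (normal_density (cp_inner n t (cp_mean \<tau> \<mu>L \<mu>R)) 1)"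
proof -
  have "cp_v n t i \<noteq> 0" for i
    using assms by (simp add: cp_v_eq)
  then have "distributed (cp_law n \<tau> \<mu>L \<mu>R) lborel (\<lambda>x. \<Sum>i\<in>{1..n}. cp_v n t i * x i)
      (normal_density (\<Sum>i\<in>{1..n}. cp_v n t i * cp_mean \<tau> \<mu>L \<mu>R i)
                      (sqrt (\<Sum>i\<in>{1..n}. (cp_v n t i * 1)\<^sup>2)))"
    unfolding cp_law_def using assms by (intro PiM_normal_linear_combination) auto
  then show ?thesis
    using sum_cp_v_squared[OF assms] by (simp add: cp_inner_def[abs_def])
qed

lemma cp_inner_tail:
  assumes "0 < t" "t < n" "0 \<le> s"
  shows "measure (cp_law n \<tau> \<mu>L \<mu>R) {x \<in> space (cp_law n \<tau> \<mu>L \<mu>R).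
           s < \<bar>cp_inner n t x - cp_inner n t (cp_mean \<tau> \<mu>L \<mu>R)\<bar>} \<le> exp (- s\<^sup>2 / 2)"
  using prob_space.normal_tail_le[OF prob_space_cp_law assms(3) cp_inner_distributed[OF assms(1,2)]] .

lemma cp_stat_false_alarm:
  assumes n: "2 \<le> n" and c: "0 \<le> c"
  shows "measure (cp_law n \<tau> \<mu> \<mu>) {X \<in> space (cp_law n \<tau> \<mu> \<mu>). c < cp_stat n X}
           \<le> card (cp_T0 n) * exp (- c\<^sup>2 / 2)"
proof -
  let ?M = "cp_law n \<tau> \<mu> \<mu>"
  let ?E = "\<lambda>t. {x \<in> space ?M. c < \<bar>cp_inner n t x - cp_inner n t (cp_mean \<tau> \<mu> \<mu>)\<bar>}"
  interpret prob_space ?M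
    by (rule prob_space_cp_law)
  have centred: "cp_inner n t (cp_mean \<tau> \<mu> \<mu>) = 0" if "t \<in> cp_T0 n" for t
  proof -
    have "0 < t" "t < n"
      using cp_T0_bounds[OF n that] by auto
    moreover have "cp_mean \<tau> \<mu> \<mu> = cp_mean t \<mu> \<mu>"
      by (simp add: cp_mean_def fun_eq_iff)
    ultimately show ?thesis
      by (simp add: cp_inner_cp_mean_of_le)
  qed
  have "{X \<in> space ?M. c < cp_stat n X} \<subseteq> (\<Union>t\<in>cp_T0 n. ?E t)"
    using centred by (auto simp: cp_stat_gt_iff)
  then have "prob {X \<in> space ?M. c < cp_stat n X} \<le> prob (\<Union>t\<in>cp_T0 n. ?E t)"
    using finite_cp_T0 by (intro finite_measure_mono) auto
  also have "\<dots> \<le> (\<Sum>t\<in>cp_T0 n. prob (?E t))"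
    using finite_cp_T0 by (intro finite_measure_subadditive_finite) auto
  also have "\<dots> \<le> (\<Sum>t\<in>cp_T0 n. exp (- c\<^sup>2 / 2))"
    using cp_T0_bounds[OF n] c by (intro sum_mono cp_inner_tail) auto
  finally show ?thesis
    by simp
qed

lemma cp_stat_detection:
  assumes n: "2 \<le> n" and \<tau>: "0 < \<tau>" "\<tau> < n" and c: "0 \<le> c"
    and snr: "12 * c\<^sup>2 < (\<mu>L - \<mu>R)\<^sup>2 * real \<tau> * (real n - real \<tau>) / real n"
  shows "measure (cp_law n \<tau> \<mu>L \<mu>R) {X \<in> space (cp_law n \<tau> \<mu>L \<mu>R). cp_stat n X \<le> c}
           \<le> exp (- c\<^sup>2 / 2)"
proof -
  let ?M = "cp_law n \<tau> \<mu>L \<mu>R"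
  interpret prob_space ?M
    by (rule prob_space_cp_law)
  obtain t where t: "t \<in> cp_T0 n"
    and signal: "(\<mu>L - \<mu>R)\<^sup>2 * real \<tau> * (real n - real \<tau>) / real n
                   \<le> 3 * (cp_inner n t (cp_mean \<tau> \<mu>L \<mu>R))\<^sup>2"
    by (rule cp_T0_captures_signal[OF n \<tau>])
  let ?m = "cp_inner n t (cp_mean \<tau> \<mu>L \<mu>R)"
  have "(2 * c)\<^sup>2 < \<bar>?m\<bar>\<^sup>2"
    using snr signal by simp
  then have far: "2 * c < \<bar>?m\<bar>"
    by (rule power_less_imp_less_base) simp
  have "c < \<bar>cp_inner n t X - ?m\<bar>" if "cp_stat n X \<le> c" for X
    using abs_cp_inner_le_cp_stat[OF t, of X] that far abs_triangle_ineq2[of ?m "cp_inner n t X"]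
      abs_minus_commute[of ?m "cp_inner n t X"] by linarith
  then have "{X \<in> space ?M. cp_stat n X \<le> c} \<subseteq> {x \<in> space ?M. c < \<bar>cp_inner n t x - ?m\<bar>}"
    by blast
  then have "prob {X \<in> space ?M. cp_stat n X \<le> c}
      \<le> prob {x \<in> space ?M. c < \<bar>cp_inner n t x - ?m\<bar>}"
    by (intro finite_measure_mono) auto
  also have "\<dots> \<le> exp (- c\<^sup>2 / 2)"
    using cp_T0_bounds[OF n t] c by (intro cp_inner_tail) auto
  finally show ?thesis .
qed

lemma signal_condition_squared:
  fixes \<Delta> L :: real and n \<tau> :: nat
  assumes "0 < \<tau>" "\<tau> < n" "0 \<le> L"
    and "sqrt (24 * L / n) < \<bar>\<Delta>\<bar> * sqrt (real \<tau> / n * (1 - real \<tau> / n))"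
  shows "24 * L < \<Delta>\<^sup>2 * real \<tau> * (real n - real \<tau>) / real n"
proof -
  have "(sqrt (24 * L / n))\<^sup>2 < (\<bar>\<Delta>\<bar> * sqrt (real \<tau> / n * (1 - real \<tau> / n)))\<^sup>2"
    using assms(4) by (rule power_strict_mono) (use assms(3) in simp_all)
  then have "24 * L / n < \<Delta>\<^sup>2 * (real \<tau> / n * (1 - real \<tau> / n))"
    using assms by (simp add: power_mult_distrib)
  also have "real \<tau> / n * (1 - real \<tau> / n) = real \<tau> * (real n - real \<tau>) / (real n * real n)"
    using assms by (simp add: field_simps)
  finally show ?thesis
    using assms by (simp add: field_simps)
qed

theorem lemmaA2:
  fixes \<epsilon> \<mu>L \<mu>R :: real and n \<tau> :: nat
  assumes "0 < \<epsilon>" "\<epsilon> < 1" "2 \<le> n" "1 \<le> \<tau>" "\<tau> \<le> n - 1"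
  defines "\<eta> \<equiv> real \<tau> / real n"
  defines "c \<equiv> sqrt (2 * ln (real (card (cp_T0 n)) / \<epsilon>))"
  shows "(\<mu>L = \<mu>R \<longrightarrow>
           measure (cp_law n \<tau> \<mu>L \<mu>R)
             {X \<in> space (cp_law n \<tau> \<mu>L \<mu>R). cp_stat n X > c} \<le> \<epsilon>)
       \<and> (\<bar>\<mu>L - \<mu>R\<bar> * sqrt (\<eta> * (1 - \<eta>)) >
              sqrt (24 * ln (real (card (cp_T0 n)) / \<epsilon>) / real n) \<longrightarrow>
           measure (cp_law n \<tau> \<mu>L \<mu>R)
             {X \<in> space (cp_law n \<tau> \<mu>L \<mu>R). cp_stat n X \<le> c} \<le> \<epsilon>)"
proof -
  let ?M = "cp_law n \<tau> \<mu>L \<mu>R"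
  define K where "K = real (card (cp_T0 n))"
  have K: "1 \<le> K"
    using finite_cp_T0 cp_T0_nonempty by (simp add: K_def Suc_le_eq card_gt_0_iff)
  then have L: "0 < ln (K / \<epsilon>)"
    using assms(1,2) by (simp add: field_simps)
  then have c: "0 \<le> c" "c\<^sup>2 = 2 * ln (K / \<epsilon>)" "exp (- c\<^sup>2 / 2) = \<epsilon> / K"
    using K assms(1) by (simp_all add: c_def K_def exp_minus)
  have \<tau>: "0 < \<tau>" "\<tau> < n"
    using assms(3-5) by auto
  show ?thesis
  proof (intro conjI impI)
    assume "\<mu>L = \<mu>R"
    then show "measure ?M {X \<in> space ?M. c < cp_stat n X} \<le> \<epsilon>"
      using cp_stat_false_alarm[OF assms(3) c(1), of \<tau> \<mu>R] K c(3) by (simp add: K_def)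
  next
    assume "\<bar>\<mu>L - \<mu>R\<bar> * sqrt (\<eta> * (1 - \<eta>)) > sqrt (24 * ln (real (card (cp_T0 n)) / \<epsilon>) / real n)"
    then have "12 * c\<^sup>2 < (\<mu>L - \<mu>R)\<^sup>2 * real \<tau> * (real n - real \<tau>) / real n"
      using signal_condition_squared[OF \<tau>, of "ln (K / \<epsilon>)"] L c(2) by (simp add: \<eta>_def K_def)
    then have "measure ?M {X \<in> space ?M. cp_stat n X \<le> c} \<le> \<epsilon> / K"
      using cp_stat_detection[OF assms(3) \<tau> c(1)] c(3) by simp
    also have "\<epsilon> / K \<le> \<epsilon>"
      using K assms(1) by (simp add: field_simps)
    finally show "measure ?M {X \<in> space ?M. cp_stat n X \<le> c} \<le> \<epsilon>" .
  qed
qed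

end
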